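(* Let $p\ge0$, $m\ge1$ be integers and, for $j\ge p$, let $\omega_j=\omega_j^{p,m}=\frac{\sqrt{j!\,(j+m)!}}{(j-p)!}$. Let $\breve{\mathbb{H}}$ be the backward weighted shift on $\mathbb{B}_p$ defined by $\breve{\mathbb{H}}e_p=0$ and $\breve{\mathbb{H}}e_k=\omega_{k-1}e_{k-1}$ for $k>p$, i.e. $$\breve{\mathbb{H}}\Big(\sum_{k\ge p}a_ke_k\Big)=\sum_{k\ge p}\omega_k a_{k+1}e_k,$$ with maximal domain $D(\breve{\mathbb{H}})=\{\phi\in\mathbb{B}_p:\breve{\mathbb{H}}\phi\in\mathbb{B}_p\}$. (Equivalently $\breve{\mathbb{H}}=a^{*p}a^{p+m}\mathbb{U}$ restricted to $\mathbb{B}_p$, where $\mathbb{U}e_k=e_{k+m-1}$.) Then $\breve{\mathbb{H}}$ is chaotic on $\mathbb{B}_p$.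
   Context: The Bargmann space $\mathbb{B}$ is the Hilbert space of entire functions with $\|\phi\|^2=\int_{\mathbb{C}}|\phi(z)|^2e^{-|z|^2}dx\,dy<\infty$; $e_k(z)=z^k/\sqrt{k!}$ is an orthonormal basis; $a\phi=\phi'$, $a^*\phi=z\phi$. $\mathbb{B}_p$ is the closed subspace spanned by $\{e_k:k\ge p\}$. Definition (Devaney): a densely defined linear operator $T$ on a Banach space $X$ is chaotic if (1) $T^n$ is closed for every positive integer $n$; (2) there is $\phi\in\bigcap_{n\ge1}D(T^n)$ whose orbit $\{\phi,T\phi,T^2\phi,\dots\}$ is dense in $X$; (3) the set of periodic points $\{\phi\in X:\exists j\in\mathbb{N},\ T^j\phi=\phi\}$ is dense in $X$. *)

theory Defs
  imports Complex_Main
begin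

text \<open>The Bargmann space is modelled through its coordinates in the orthonormal
basis e_k = z^k / sqrt(k!): phi = sum_k a_k e_k corresponds to the square-summable
coefficient sequence a.  This identification is unitary (norm of phi = l2 norm of a).\<close>

definition l2 :: "(nat \<Rightarrow> complex) set" where
  "l2 = {a. summable (\<lambda>k. (cmod (a k))\<^sup>2)}"

definition l2norm :: "(nat \<Rightarrow> complex) \<Rightarrow> real" where
  "l2norm a = sqrt (\<Sum>k. (cmod (a k))\<^sup>2)"

definition Bp :: "nat \<Rightarrow> (nat \<Rightarrow> complex) set" where
  "Bp p = {a \<in> l2. \<forall>k<p. a k = 0}"

definition omega :: "nat \<Rightarrow> nat \<Rightarrow> nat \<Rightarrow> real" where
  "omega p m j = sqrt (fact j * fact (j + m)) / fact (j - p)"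

definition Hbrev :: "nat \<Rightarrow> nat \<Rightarrow> (nat \<Rightarrow> complex) \<Rightarrow> (nat \<Rightarrow> complex)" where
  "Hbrev p m a = (\<lambda>k. if p \<le> k then complex_of_real (omega p m k) * a (Suc k) else 0)"

definition Hdom :: "nat \<Rightarrow> nat \<Rightarrow> (nat \<Rightarrow> complex) set" where
  "Hdom p m = {a \<in> Bp p. Hbrev p m a \<in> Bp p}"

definition pow_dom :: "(nat \<Rightarrow> complex) set \<Rightarrow> ((nat \<Rightarrow> complex) \<Rightarrow> (nat \<Rightarrow> complex))
    \<Rightarrow> nat \<Rightarrow> (nat \<Rightarrow> complex) set" where
  "pow_dom D T n = {x \<in> D. \<forall>j<n. (T ^^ j) x \<in> D}"

definition dense_in :: "(nat \<Rightarrow> complex) set \<Rightarrow> (nat \<Rightarrow> complex) set \<Rightarrow> bool" where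
  "dense_in S X \<longleftrightarrow> S \<subseteq> X \<and> (\<forall>x\<in>X. \<forall>e>0. \<exists>s\<in>S. l2norm (x - s) < e)"

definition closed_op :: "(nat \<Rightarrow> complex) set \<Rightarrow> (nat \<Rightarrow> complex) set
    \<Rightarrow> ((nat \<Rightarrow> complex) \<Rightarrow> (nat \<Rightarrow> complex)) \<Rightarrow> bool" where
  "closed_op X D T \<longleftrightarrow>
     (\<forall>xs x y. (\<forall>i. xs i \<in> D) \<longrightarrow> x \<in> X \<longrightarrow> y \<in> X \<longrightarrow>
        (\<lambda>i. l2norm (xs i - x)) \<longlonglongrightarrow> 0 \<longrightarrow> (\<lambda>i. l2norm (T (xs i) - y)) \<longlonglongrightarrow> 0 \<longrightarrow>
        x \<in> D \<and> T x = y)"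

definition linear_op :: "(nat \<Rightarrow> complex) set \<Rightarrow> (nat \<Rightarrow> complex) set
    \<Rightarrow> ((nat \<Rightarrow> complex) \<Rightarrow> (nat \<Rightarrow> complex)) \<Rightarrow> bool" where
  "linear_op X D T \<longleftrightarrow> D \<subseteq> X \<and> T ` D \<subseteq> X \<and>
     (\<forall>x\<in>D. \<forall>y\<in>D. \<forall>c::complex. (\<lambda>k. x k + c * y k) \<in> D \<and>
         T (\<lambda>k. x k + c * y k) = (\<lambda>k. T x k + c * T y k))"

definition chaotic :: "(nat \<Rightarrow> complex) set \<Rightarrow> (nat \<Rightarrow> complex) set
    \<Rightarrow> ((nat \<Rightarrow> complex) \<Rightarrow> (nat \<Rightarrow> complex)) \<Rightarrow> bool" where
  "chaotic X D T \<longleftrightarrow>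
     linear_op X D T \<and> dense_in D X \<and>
     (\<forall>n\<ge>1. closed_op X (pow_dom D T n) (T ^^ n)) \<and>
     (\<exists>\<phi>. (\<forall>n\<ge>1. \<phi> \<in> pow_dom D T n) \<and> dense_in (range (\<lambda>n. (T ^^ n) \<phi>)) X) \<and>
     dense_in {\<phi>\<in>X. \<exists>j\<ge>1. \<phi> \<in> pow_dom D T j \<and> (T ^^ j) \<phi> = \<phi>} X"

end

theory Submission
  imports Defs "HOL-Library.Discrete_Functions" "HOL-Library.Countable" "HOL-Library.Infinite_Set"
begin

text \<open>Every weight satisfies omega_j^2 >= j + 1, so a product of d consecutive weights is at
least sqrt (d!), which beats every geometric sequence. Hence a finitely supported vector v can be
moved d places to the right and divided by the corresponding product of weights: H^d brings this
copy back to v, while the copy itself has tiny norm. Repeating v every N coordinates in this way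
gives an N-periodic point close to v; putting the n-th vector of an enumeration of the rational
finitely supported vectors into the block of coordinates [n^2, n^2 + n) gives a vector whose orbit
comes close to each of them, because the later blocks are still small after applying H^(n^2).
The powers H^n are closed since l2 convergence implies coordinatewise convergence, and the
maximal domain of H^n consists of the x with x and H^n x in B_p: as all weights are at least 1,
the lower powers H^j x are dominated by a shift of H^n x.\<close>

section \<open>Square-summable sequences\<close>

lemma power2_sum_le: "((x::real) + y)\<^sup>2 \<le> 2 * x\<^sup>2 + 2 * y\<^sup>2"
  using sum_squares_bound[of x y] by (simp add: power2_eq_square algebra_simps)

lemma l2_comparison:
  assumes "\<And>k. (cmod (a k))\<^sup>2 \<le> f k" "f sums s"
  shows "a \<in> l2" "l2norm a \<le> sqrt s"
proof -
  have "summable (\<lambda>k. (cmod (a k))\<^sup>2)"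
    using summable_comparison_test'[of f 0 "\<lambda>k. (cmod (a k))\<^sup>2"] assms by (force simp: sums_iff)
  then show "a \<in> l2" by (simp add: l2_def)
  have "(\<Sum>k. (cmod (a k))\<^sup>2) \<le> s"
    using sums_le[OF _ summable_sums[OF \<open>summable _\<close>] assms(2)] assms(1) by blast
  then show "l2norm a \<le> sqrt s" by (simp add: l2norm_def)
qed

lemma sums_l2norm_sq: "a \<in> l2 \<Longrightarrow> (\<lambda>k. (cmod (a k))\<^sup>2) sums (l2norm a)\<^sup>2"
  by (simp add: l2_def l2norm_def summable_sums suminf_nonneg)

lemma l2_add_scaled:
  assumes "a \<in> l2" "b \<in> l2"
  shows "(\<lambda>k. a k + c * b k) \<in> l2"
proof (rule l2_comparison)
  have "cmod (a k + c * b k) \<le> cmod (a k) + cmod c * cmod (b k)" for k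
    by (metis norm_mult norm_triangle_ineq)
  then have "(cmod (a k + c * b k))\<^sup>2 \<le> (cmod (a k) + cmod c * cmod (b k))\<^sup>2" for k
    by (simp add: power_mono)
  also have "\<dots> k \<le> 2 * (cmod (a k))\<^sup>2 + 2 * (cmod c)\<^sup>2 * (cmod (b k))\<^sup>2" for k
    using power2_sum_le[of "cmod (a k)" "cmod c * cmod (b k)"] by (simp add: power_mult_distrib)
  finally show
      "(cmod (a k + c * b k))\<^sup>2 \<le> 2 * (cmod (a k))\<^sup>2 + 2 * (cmod c)\<^sup>2 * (cmod (b k))\<^sup>2"
    for k .
  show "(\<lambda>k. 2 * (cmod (a k))\<^sup>2 + 2 * (cmod c)\<^sup>2 * (cmod (b k))\<^sup>2)
      sums (2 * (l2norm a)\<^sup>2 + 2 * (cmod c)\<^sup>2 * (l2norm b)\<^sup>2)"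
    using assms by (intro sums_add sums_mult sums_l2norm_sq)
qed

lemma l2_diff: "a \<in> l2 \<Longrightarrow> b \<in> l2 \<Longrightarrow> a - b \<in> l2"
  using l2_add_scaled[of a b "-1"] by (simp add: fun_diff_def)

lemma l2norm_diff_le:
  assumes "x \<in> l2" "y \<in> l2" "z \<in> l2"
  shows "l2norm (x - z) \<le> sqrt (2 * (l2norm (x - y))\<^sup>2 + 2 * (l2norm (y - z))\<^sup>2)"
proof (rule l2_comparison(2))
  show "(cmod ((x - z) k))\<^sup>2 \<le> 2 * (cmod ((x - y) k))\<^sup>2 + 2 * (cmod ((y - z) k))\<^sup>2" for k
  proof -
    have "cmod ((x - z) k) \<le> cmod ((x - y) k) + cmod ((y - z) k)"
      using norm_triangle_ineq[of "x k - y k" "y k - z k"] by simp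
    then have "(cmod ((x - z) k))\<^sup>2 \<le> (cmod ((x - y) k) + cmod ((y - z) k))\<^sup>2"
      by (simp add: power_mono)
    then show ?thesis using power2_sum_le[of "cmod ((x - y) k)" "cmod ((y - z) k)"] by linarith
  qed
  show "(\<lambda>k. 2 * (cmod ((x - y) k))\<^sup>2 + 2 * (cmod ((y - z) k))\<^sup>2)
      sums (2 * (l2norm (x - y))\<^sup>2 + 2 * (l2norm (y - z))\<^sup>2)"
    using assms by (intro sums_add sums_mult sums_l2norm_sq l2_diff)
qed

lemma norm_le_l2norm: "a \<in> l2 \<Longrightarrow> cmod (a k) \<le> l2norm a"
proof -
  assume "a \<in> l2"
  then have "(\<Sum>j\<in>{k}. (cmod (a j))\<^sup>2) \<le> (\<Sum>j. (cmod (a j))\<^sup>2)"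
    unfolding l2_def by (intro sum_le_suminf) auto
  then show ?thesis unfolding l2norm_def by (simp add: real_le_rsqrt)
qed

lemma tendsto_coord_if_l2norm_tendsto:
  assumes "\<And>i. xs i \<in> l2" "x \<in> l2" "(\<lambda>i. l2norm (xs i - x)) \<longlonglongrightarrow> 0"
  shows "(\<lambda>i. xs i k) \<longlonglongrightarrow> x k"
proof -
  have "norm (xs i k - x k) \<le> l2norm (xs i - x)" for i
    using norm_le_l2norm[OF l2_diff[OF assms(1,2)], of i k] by simp
  then have "(\<lambda>i. norm (xs i k - x k)) \<longlonglongrightarrow> 0"
    by (intro tendsto_sandwich[OF _ _ tendsto_const assms(3)]) auto
  then have "(\<lambda>i. xs i k - x k) \<longlonglongrightarrow> 0" by (rule tendsto_norm_zero_cancel)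
  then show ?thesis by (simp add: LIM_zero_iff)
qed

lemma summable_geometric_shifted: "summable (\<lambda>k. C * ((1::real)/2)^(k - p))"
  using summable_iff_shift[of "\<lambda>k. C * ((1::real)/2)^(k - p)" p]
  by (simp add: summable_geometric)

lemma l2norm_le_geometric_tail:
  assumes "\<And>k. k < p + M \<Longrightarrow> a k = 0" "\<And>k. p + M \<le> k \<Longrightarrow> (cmod (a k))\<^sup>2 \<le> C * (1/2)^(k - p)"
  shows "l2norm a \<le> sqrt (2 * C * (1/2)^M)"
proof (rule l2_comparison(2))
  define f where "f k = (if p + M \<le> k then C * (1/2)^(k - p) else (0::real))" for k
  show "(cmod (a k))\<^sup>2 \<le> f k" for k
    using assms by (cases "p + M \<le> k") (auto simp: f_def)
  have "(\<lambda>i. f (i + (p + M))) = (\<lambda>i. (C * (1/2)^M) * (1/2)^i)"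
    by (auto simp: f_def power_add)
  moreover have "(\<lambda>i. (C * (1/2)^M) * ((1::real)/2)^i) sums (2 * C * (1/2)^M)"
    using sums_mult[OF geometric_sums[of "1/2::real"], of "C * (1/2)^M"] by (simp add: ac_simps)
  ultimately have "(\<lambda>i. f (i + (p + M))) sums (2 * C * (1/2)^M)" by simp
  moreover have "(\<Sum>i<p + M. f i) = 0" by (simp add: f_def)
  ultimately show "f sums (2 * C * (1/2)^M)"
    using sums_iff_shift[of f "p + M"] by simp
qed

lemma Bp_if_geometric_bound:
  assumes "\<And>k. k < p \<Longrightarrow> a k = 0" "\<And>k. K \<le> k \<Longrightarrow> (cmod (a k))\<^sup>2 \<le> C * (1/2)^(k - p)"
  shows "a \<in> Bp p"
proof -
  have "summable (\<lambda>k. (cmod (a k))\<^sup>2)"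
    using assms(2) by (intro summable_comparison_test[OF _ summable_geometric_shifted]) auto
  then show ?thesis using assms(1) by (simp add: Bp_def l2_def)
qed

lemma Bp_add_scaled: "a \<in> Bp p \<Longrightarrow> b \<in> Bp p \<Longrightarrow> (\<lambda>k. a k + c * b k) \<in> Bp p"
  using l2_add_scaled unfolding Bp_def by auto

section \<open>Density of finitely supported rational vectors\<close>

definition rat_complex :: "rat \<times> rat \<Rightarrow> complex" where
  "rat_complex q = Complex (of_rat (fst q)) (of_rat (snd q))"

definition rat_vec :: "nat \<Rightarrow> (rat \<times> rat) list \<Rightarrow> nat \<Rightarrow> complex" where
  "rat_vec p xs k = (if p \<le> k \<and> k - p < length xs then rat_complex (xs ! (k - p)) else 0)"

lemma rat_complex_dense:
  assumes "0 < d" shows "\<exists>q. cmod (z - rat_complex q) < d"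
proof -
  have "\<exists>q. \<bar>x - of_rat q\<bar> < d / 2" for x
  proof -
    obtain r where "r \<in> \<rat>" "x - d / 2 < r" "r < x + d / 2"
      using Rats_dense_in_real[of "x - d / 2" "x + d / 2"] assms by auto
    then obtain q where "x - d / 2 < of_rat q" "of_rat q < x + d / 2" by (auto elim: Rats_cases)
    then show ?thesis by (intro exI[of _ q]) (auto simp: abs_if)
  qed
  then obtain q1 q2 where "\<bar>Re z - of_rat q1\<bar> < d / 2" "\<bar>Im z - of_rat q2\<bar> < d / 2"
    by blast
  moreover have "cmod (z - rat_complex (q1, q2))
      \<le> \<bar>Re (z - rat_complex (q1, q2))\<bar> + \<bar>Im (z - rat_complex (q1, q2))\<bar>"
    by (rule cmod_le)
  ultimately have "cmod (z - rat_complex (q1, q2)) < d" by (simp add: rat_complex_def)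
  then show ?thesis by blast
qed

lemma norm_rat_vec_le: "cmod (rat_vec p xs k) \<le> (\<Sum>q\<leftarrow>xs. cmod (rat_complex q))"
  by (auto simp: rat_vec_def intro!: member_le_sum_list sum_list_nonneg)

lemma rat_vec_Bp: "rat_vec p xs \<in> Bp p"
  by (rule Bp_if_geometric_bound[where K = "p + length xs" and C = 0]) (auto simp: rat_vec_def)

lemma l2norm_nonneg: "a \<in> l2 \<Longrightarrow> 0 \<le> l2norm a"
  by (rule order_trans[OF norm_ge_zero norm_le_l2norm])

lemma rat_vec_dense:
  assumes x: "x \<in> Bp p" and e: "0 < e"
  shows "\<exists>xs. l2norm (x - rat_vec p xs) < e"
proof -
  have sx: "summable (\<lambda>k. (cmod (x k))\<^sup>2)" and x0: "\<And>k. k < p \<Longrightarrow> x k = 0"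
    using x by (auto simp: Bp_def l2_def)
  obtain L where "\<forall>n\<ge>L. norm (\<Sum>i. (cmod (x (i + n)))\<^sup>2) < e\<^sup>2 / 2"
    using suminf_exist_split[OF _ sx, of "e\<^sup>2 / 2"] e by auto
  then have "norm (\<Sum>i. (cmod (x (i + (p + L))))\<^sup>2) < e\<^sup>2 / 2" by (metis le_add2)
  then have L: "(\<Sum>i. (cmod (x (i + (p + L))))\<^sup>2) < e\<^sup>2 / 2" by (simp add: abs_less_iff)
  define \<delta> where "\<delta> = e / sqrt (2 * (real (p + L) + 1))"
  have \<delta>: "0 < \<delta>" using e by (simp add: \<delta>_def)
  have "real (p + L) * \<delta>\<^sup>2 = e\<^sup>2 / 2 * (real (p + L) / (real (p + L) + 1))"
    by (simp add: \<delta>_def power_divide)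
  also have "\<dots> < e\<^sup>2 / 2 * 1" using e by (intro mult_strict_left_mono) auto
  finally have head: "real (p + L) * \<delta>\<^sup>2 < e\<^sup>2 / 2" by simp
  have "\<forall>i. \<exists>q. cmod (x (p + i) - rat_complex q) < \<delta>" using rat_complex_dense[OF \<delta>] by blast
  then obtain Q where Q: "\<And>i. cmod (x (p + i) - rat_complex (Q i)) < \<delta>" by metis
  define f where "f k = (if k < p + L then \<delta>\<^sup>2 else (cmod (x k))\<^sup>2)" for k
  have "(cmod ((x - rat_vec p (map Q [0..<L])) k))\<^sup>2 \<le> f k" for k
  proof (cases "k < p + L")
    case True
    have "cmod ((x - rat_vec p (map Q [0..<L])) k) \<le> \<delta>"
      using Q[of "k - p"] x0[of k] \<delta> True by (auto simp: rat_vec_def less_imp_le)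
    then show ?thesis using True by (simp add: f_def power_mono)
  qed (auto simp: f_def rat_vec_def)
  moreover have "f sums (real (p + L) * \<delta>\<^sup>2 + (\<Sum>i. (cmod (x (i + (p + L))))\<^sup>2))"
  proof -
    have "summable (\<lambda>i. (cmod (x (i + (p + L))))\<^sup>2)"
      using sx by (subst summable_iff_shift)
    then have "(\<lambda>i. f (i + (p + L))) sums (\<Sum>i. (cmod (x (i + (p + L))))\<^sup>2)"
      by (simp add: f_def summable_sums)
    moreover have "(\<Sum>i<p + L. f i) = real (p + L) * \<delta>\<^sup>2" by (simp add: f_def)
    ultimately show ?thesis using sums_iff_shift[of f "p + L"] by (simp add: add.commute)
  qed
  ultimately have "l2norm (x - rat_vec p (map Q [0..<L]))
      \<le> sqrt (real (p + L) * \<delta>\<^sup>2 + (\<Sum>i. (cmod (x (i + (p + L))))\<^sup>2))"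
    by (rule l2_comparison(2))
  also have "\<dots> < sqrt (e\<^sup>2)" using head L by (intro real_sqrt_less_mono) simp
  finally show ?thesis using e by auto
qed

lemma dense_in_Bp_if_near_rat_vecs:
  assumes "S \<subseteq> Bp p" and near: "\<And>xs e. 0 < e \<Longrightarrow> \<exists>a\<in>S. l2norm (rat_vec p xs - a) < e"
  shows "dense_in S (Bp p)"
  unfolding dense_in_def
proof (intro conjI assms ballI allI impI)
  fix x and e :: real
  assume x: "x \<in> Bp p" and e: "0 < e"
  obtain xs where xs: "l2norm (x - rat_vec p xs) < e / 2"
    using rat_vec_dense[OF x, of "e / 2"] e by auto
  obtain a where a: "a \<in> S" "l2norm (rat_vec p xs - a) < e / 2" using near[of "e / 2"] e by auto
  have l2: "x \<in> l2" "rat_vec p xs \<in> l2" "a \<in> l2"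
    using x rat_vec_Bp a(1) assms(1) by (auto simp: Bp_def)
  have "(l2norm (x - rat_vec p xs))\<^sup>2 < (e / 2)\<^sup>2" "(l2norm (rat_vec p xs - a))\<^sup>2 < (e / 2)\<^sup>2"
    using xs a(2) l2norm_nonneg[OF l2_diff] l2 by (auto intro: power_strict_mono)
  then have "2 * (l2norm (x - rat_vec p xs))\<^sup>2 + 2 * (l2norm (rat_vec p xs - a))\<^sup>2 < e\<^sup>2"
    by (simp add: power_divide)
  then have "l2norm (x - a) < sqrt (e\<^sup>2)"
    by (rule le_less_trans[OF l2norm_diff_le[OF l2] real_sqrt_less_mono])
  then show "\<exists>s\<in>S. l2norm (x - s) < e" using a(1) e by auto
qed

lemma near_rat_vec_if_geometric_tails:
  assumes tails: "\<And>M0. \<exists>M\<ge>M0. \<exists>a\<in>S. (\<forall>k<p + M. a k = rat_vec p xs k) \<and>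
      (\<forall>k\<ge>p + M. (cmod (a k))\<^sup>2 \<le> C * (1/2)^(k - p))"
    and e: "0 < e"
  shows "\<exists>a\<in>S. l2norm (rat_vec p xs - a) < e"
proof -
  obtain M0 where M0: "((1::real)/2)^M0 < e\<^sup>2 / (2 * (\<bar>C\<bar> + 1))"
    using real_arch_pow_inv[of "e\<^sup>2 / (2 * (\<bar>C\<bar> + 1))" "1/2"] e by auto
  obtain M a where M: "M \<ge> M0 + length xs" and a: "a \<in> S" "\<forall>k<p + M. a k = rat_vec p xs k"
    "\<forall>k\<ge>p + M. (cmod (a k))\<^sup>2 \<le> C * (1/2)^(k - p)"
    using tails by blast
  have "l2norm (rat_vec p xs - a) \<le> sqrt (2 * C * (1/2)^M)"
    using a M by (intro l2norm_le_geometric_tail) (auto simp: rat_vec_def)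
  also have "2 * C * (1/2)^M \<le> 2 * (\<bar>C\<bar> + 1) * (1/2)^M"
    by (intro mult_left_mono mult_right_mono) auto
  also have "\<dots> \<le> 2 * (\<bar>C\<bar> + 1) * (1/2)^M0"
    using M by (intro mult_left_mono power_decreasing) auto
  also have "\<dots> < e\<^sup>2" using M0 by (simp add: field_simps)
  finally show ?thesis using a(1) e by (auto intro: le_less_trans real_sqrt_less_mono)
qed

lemma dense_in_Bp_if_geometric_tails:
  assumes "S \<subseteq> Bp p"
    and "\<And>xs. \<exists>C. \<forall>M0. \<exists>M\<ge>M0. \<exists>a\<in>S. (\<forall>k<p + M. a k = rat_vec p xs k) \<and>
      (\<forall>k\<ge>p + M. (cmod (a k))\<^sup>2 \<le> C * (1/2)^(k - p))"
  shows "dense_in S (Bp p)"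
proof (rule dense_in_Bp_if_near_rat_vecs[OF assms(1)])
  fix xs and e :: real
  assume "0 < e"
  obtain C where "\<forall>M0. \<exists>M\<ge>M0. \<exists>a\<in>S. (\<forall>k<p + M. a k = rat_vec p xs k) \<and>
      (\<forall>k\<ge>p + M. (cmod (a k))\<^sup>2 \<le> C * (1/2)^(k - p))"
    using assms(2) by blast
  then show "\<exists>a\<in>S. l2norm (rat_vec p xs - a) < e"
    using near_rat_vec_if_geometric_tails[OF _ \<open>0 < e\<close>] by blast
qed

section \<open>Products of weights\<close>

lemma omega_sq_ge:
  assumes "m \<ge> 1"
  shows "real j + 1 \<le> (omega p m j)\<^sup>2"
proof -
  have "(real j + 1) * fact j = (fact (Suc j) :: real)" by simp
  also have "\<dots> \<le> fact (j + m)" using assms by (intro fact_mono) auto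
  finally have "real j + 1 \<le> fact j * fact (j + m) / (fact j)\<^sup>2"
    by (simp add: power2_eq_square field_simps)
  also have "\<dots> \<le> fact j * fact (j + m) / (fact (j - p))\<^sup>2"
    by (intro divide_left_mono power_mono mult_pos_pos fact_mono) auto
  also have "\<dots> = (omega p m j)\<^sup>2" by (simp add: omega_def power_divide)
  finally show ?thesis .
qed

lemma omega_ge_1: "m \<ge> 1 \<Longrightarrow> 1 \<le> omega p m j"
  using omega_sq_ge[of m j p] power2_le_imp_le[of 1 "omega p m j"] by (simp add: omega_def)

definition omega_prod :: "nat \<Rightarrow> nat \<Rightarrow> nat \<Rightarrow> nat \<Rightarrow> real" where
  "omega_prod p m N k = (\<Prod>t<N. omega p m (k + t))"

lemma omega_prod_0 [simp]: "omega_prod p m 0 k = 1"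
  by (simp add: omega_prod_def)

lemma omega_prod_Suc: "omega_prod p m (Suc N) k = omega p m k * omega_prod p m N (Suc k)"
  unfolding omega_prod_def prod.lessThan_Suc_shift by simp

lemma omega_prod_add: "omega_prod p m (M + N) k = omega_prod p m M k * omega_prod p m N (k + M)"
  by (induction M arbitrary: k) (simp_all add: omega_prod_Suc)

lemma omega_prod_ge_1: "m \<ge> 1 \<Longrightarrow> 1 \<le> omega_prod p m N k"
  unfolding omega_prod_def by (intro prod_ge_1) (auto intro: omega_ge_1)

lemma omega_prod_pos: "m \<ge> 1 \<Longrightarrow> 0 < omega_prod p m N k"
  using omega_prod_ge_1[of m p N k] by linarith

lemma fact_le_omega_prod_sq: "m \<ge> 1 \<Longrightarrow> fact N \<le> (omega_prod p m N k)\<^sup>2"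
proof (induction N)
  case (Suc N)
  have "fact (Suc N) = fact N * (real N + 1)" by simp
  also have "\<dots> \<le> (omega_prod p m N k)\<^sup>2 * (omega p m (k + N))\<^sup>2"
    using Suc omega_sq_ge[of m "k + N" p] by (intro mult_mono) auto
  also have "\<dots> = (omega_prod p m (Suc N) k)\<^sup>2"
    using omega_prod_add[of p m N 1 k] by (simp add: omega_prod_def power_mult_distrib)
  finally show ?case .
qed simp

lemma power_le_power_self_mul_fact: "(c::nat) ^ d \<le> c ^ c * fact d"
proof (induction d)
  case (Suc d)
  show ?case
  proof (cases "Suc d \<le> c")
    case True
    then have "c ^ Suc d \<le> c ^ c" by (intro power_increasing) auto
    also have "\<dots> \<le> c ^ c * fact (Suc d)" using fact_ge_1 by (metis mult_le_mono2 mult.right_neutral)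
    finally show ?thesis .
  next
    case False
    have "c ^ Suc d \<le> c * (c ^ c * fact d)" using Suc by simp
    also have "\<dots> \<le> Suc d * (c ^ c * fact d)" using False by (intro mult_right_mono) auto
    finally show ?thesis by (simp add: algebra_simps)
  qed
qed (auto simp: Suc_le_eq)

lemma norm_div_omega_prod_sq_le:
  assumes m: "m \<ge> 1" and C: "0 \<le> C" and v: "(cmod v)\<^sup>2 * 2 ^ e \<le> C * 16 ^ d"
  shows "(cmod (v / of_real (omega_prod p m d k)))\<^sup>2 \<le> 16 ^ 16 * C * (1/2) ^ e"
proof -
  define w where "w = omega_prod p m d k"
  have w: "0 < w" using omega_prod_pos[OF m] by (simp add: w_def)
  have "real (16 ^ d) \<le> real (16 ^ 16 * fact d)"
    by (simp only: of_nat_le_iff power_le_power_self_mul_fact)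
  then have "(16::real) ^ d \<le> 16 ^ 16 * fact d" by simp
  also have "\<dots> \<le> 16 ^ 16 * w\<^sup>2" using fact_le_omega_prod_sq[OF m] by (simp add: w_def)
  finally have "C * 16 ^ d \<le> C * (16 ^ 16 * w\<^sup>2)" using C by (rule mult_left_mono)
  then have "(cmod v)\<^sup>2 * 2 ^ e \<le> 16 ^ 16 * C * w\<^sup>2" using v by (simp add: ac_simps)
  then show ?thesis
    using w by (simp add: w_def[symmetric] norm_divide power_divide field_simps)
qed

section \<open>Powers of the shift: linearity, domain and closedness\<close>

lemma Hbrev_power_apply:
  "p \<le> k \<Longrightarrow> (Hbrev p m ^^ N) a k = of_real (omega_prod p m N k) * a (k + N)"
  by (induction N arbitrary: k) (simp_all add: Hbrev_def omega_prod_Suc)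

lemma Hbrev_power_below: "k < p \<Longrightarrow> 0 < N \<Longrightarrow> (Hbrev p m ^^ N) a k = 0"
  by (cases N) (auto simp: Hbrev_def)

lemma Hbrev_add_scaled: "Hbrev p m (\<lambda>k. x k + c * y k) = (\<lambda>k. Hbrev p m x k + c * Hbrev p m y k)"
  by (auto simp: Hbrev_def algebra_simps)

lemma linear_op_Hbrev: "linear_op (Bp p) (Hdom p m) (Hbrev p m)"
  unfolding linear_op_def Hdom_def by (auto simp: Hbrev_add_scaled Bp_add_scaled)

lemma rat_vec_Hdom: "rat_vec p xs \<in> Hdom p m"
proof -
  have "Hbrev p m (rat_vec p xs) \<in> Bp p"
    by (rule Bp_if_geometric_bound[where K = "p + length xs" and C = 0])
      (auto simp: rat_vec_def Hbrev_def)
  then show ?thesis using rat_vec_Bp by (simp add: Hdom_def)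
qed

lemma dense_Hdom: "dense_in (Hdom p m) (Bp p)"
proof (rule dense_in_Bp_if_near_rat_vecs)
  show "Hdom p m \<subseteq> Bp p" by (auto simp: Hdom_def)
  show "\<exists>a\<in>Hdom p m. l2norm (rat_vec p xs - a) < e" if "0 < e" for xs e
    using that rat_vec_Hdom by (intro bexI[of _ "rat_vec p xs"]) (auto simp: l2norm_def)
qed

lemma Hbrev_power_Bp_if_le:
  assumes m: "m \<ge> 1" and x: "x \<in> Bp p" and y: "(Hbrev p m ^^ n) x \<in> Bp p" and j: "j \<le> n"
  shows "(Hbrev p m ^^ j) x \<in> Bp p"
proof (cases "j = 0")
  case False
  define d where "d = n - j"
  have shifted: "summable (\<lambda>k. (cmod ((Hbrev p m ^^ n) x (k - d)))\<^sup>2)"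
    using y summable_iff_shift[of "\<lambda>k. (cmod ((Hbrev p m ^^ n) x (k - d)))\<^sup>2" d]
    by (simp add: Bp_def l2_def)
  have le: "cmod ((Hbrev p m ^^ j) x k) \<le> cmod ((Hbrev p m ^^ n) x (k - d))"
    if k: "p + d \<le> k" for k
  proof -
    have n: "n = d + j" and kd: "k - d + d = k" using j k by (auto simp: d_def)
    have "(Hbrev p m ^^ n) x (k - d)
        = of_real (omega_prod p m (d + j) (k - d)) * x (k - d + (d + j))"
      using k by (simp add: Hbrev_power_apply n)
    also have "\<dots> = of_real (omega_prod p m d (k - d)) * (of_real (omega_prod p m j k) * x (k + j))"
      using kd by (simp add: omega_prod_add add.assoc)
    also have "\<dots> = of_real (omega_prod p m d (k - d)) * (Hbrev p m ^^ j) x k"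
      using k by (simp add: Hbrev_power_apply)
    finally have
      "(Hbrev p m ^^ n) x (k - d) = of_real (omega_prod p m d (k - d)) * (Hbrev p m ^^ j) x k" .
    moreover have "1 \<le> \<bar>omega_prod p m d (k - d)\<bar>"
      by (rule order_trans[OF omega_prod_ge_1[OF m] abs_ge_self])
    ultimately show ?thesis by (simp add: norm_mult mult_le_cancel_right1)
  qed
  have "summable (\<lambda>k. (cmod ((Hbrev p m ^^ j) x k))\<^sup>2)"
    by (rule summable_comparison_test'[OF shifted, where N = "p + d"]) (simp add: le power_mono)
  then show ?thesis using Hbrev_power_below False by (auto simp: Bp_def l2_def)
qed (use x in simp)

lemma pow_dom_Hdom_iff:
  assumes "m \<ge> 1" "0 < n"
  shows "x \<in> pow_dom (Hdom p m) (Hbrev p m) n \<longleftrightarrow> x \<in> Bp p \<and> (Hbrev p m ^^ n) x \<in> Bp p"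
proof
  assume x: "x \<in> pow_dom (Hdom p m) (Hbrev p m) n"
  then have "(Hbrev p m ^^ (n - 1)) x \<in> Hdom p m" using assms(2) by (simp add: pow_dom_def)
  moreover have "(Hbrev p m ^^ n) x = Hbrev p m ((Hbrev p m ^^ (n - 1)) x)"
    using assms(2) by (cases n) simp_all
  ultimately have "(Hbrev p m ^^ n) x \<in> Bp p" by (simp add: Hdom_def)
  then show "x \<in> Bp p \<and> (Hbrev p m ^^ n) x \<in> Bp p"
    using x by (simp add: pow_dom_def Hdom_def)
next
  assume "x \<in> Bp p \<and> (Hbrev p m ^^ n) x \<in> Bp p"
  then have Bp_j: "(Hbrev p m ^^ j) x \<in> Bp p" if "j \<le> n" for j
    using Hbrev_power_Bp_if_le[OF assms(1)] that by blast
  have D: "(Hbrev p m ^^ j) x \<in> Hdom p m" if "j < n" for j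
    using Bp_j[of j] Bp_j[of "Suc j"] that by (simp add: Hdom_def)
  show "x \<in> pow_dom (Hdom p m) (Hbrev p m) n"
    using D D[of 0] assms(2) by (simp add: pow_dom_def)
qed

lemma closed_op_Hbrev_power:
  assumes m: "m \<ge> 1" and n: "0 < n"
  shows "closed_op (Bp p) (pow_dom (Hdom p m) (Hbrev p m) n) (Hbrev p m ^^ n)"
  unfolding closed_op_def
proof (intro allI impI)
  fix xs x y
  assume xs: "\<forall>i. xs i \<in> pow_dom (Hdom p m) (Hbrev p m) n" and x: "x \<in> Bp p" and y: "y \<in> Bp p"
    and lim_x: "(\<lambda>i. l2norm (xs i - x)) \<longlonglongrightarrow> 0"
    and lim_y: "(\<lambda>i. l2norm ((Hbrev p m ^^ n) (xs i) - y)) \<longlonglongrightarrow> 0"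
  have l2: "xs i \<in> l2" "(Hbrev p m ^^ n) (xs i) \<in> l2" "x \<in> l2" "y \<in> l2" for i
    using xs x y pow_dom_Hdom_iff[OF m n] by (auto simp: Bp_def)
  have "(Hbrev p m ^^ n) x k = y k" for k
  proof (cases "p \<le> k")
    case True
    have "(\<lambda>i. (Hbrev p m ^^ n) (xs i) k) \<longlonglongrightarrow> of_real (omega_prod p m n k) * x (k + n)"
      using True tendsto_coord_if_l2norm_tendsto[OF l2(1,3) lim_x]
      by (simp add: Hbrev_power_apply tendsto_mult_left)
    moreover have "(\<lambda>i. (Hbrev p m ^^ n) (xs i) k) \<longlonglongrightarrow> y k"
      by (rule tendsto_coord_if_l2norm_tendsto[OF l2(2,4) lim_y])
    ultimately have "of_real (omega_prod p m n k) * x (k + n) = y k" by (rule LIMSEQ_unique)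
    then show ?thesis using True by (simp add: Hbrev_power_apply)
  qed (use y Hbrev_power_below n in \<open>simp add: Bp_def\<close>)
  then have "(Hbrev p m ^^ n) x = y" by (rule ext)
  then show "x \<in> pow_dom (Hdom p m) (Hbrev p m) n \<and> (Hbrev p m ^^ n) x = y"
    using x y pow_dom_Hdom_iff[OF m n] by auto
qed

section \<open>Periodic points\<close>

text \<open>The N-periodic repetition of v_p, ..., v_(p+N-1), the copy at distance q N divided by
the product of weights that H^(q N) multiplies it with.\<close>

definition periodic_point :: "nat \<Rightarrow> nat \<Rightarrow> nat \<Rightarrow> (nat \<Rightarrow> complex) \<Rightarrow> nat \<Rightarrow> complex" where
  "periodic_point p m N v k = (if p \<le> k then v (p + (k - p) mod N) /
      of_real (omega_prod p m ((k - p) div N * N) (p + (k - p) mod N)) else 0)"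

lemma periodic_point_head: "p \<le> k \<Longrightarrow> k < p + N \<Longrightarrow> periodic_point p m N v k = v k"
  by (simp add: periodic_point_def)

lemma periodic_point_tail:
  assumes m: "m \<ge> 1" and N: "0 < N" and v: "\<And>k. cmod (v k) \<le> V" and k: "p + N \<le> k"
  shows "(cmod (periodic_point p m N v k))\<^sup>2 \<le> 16 ^ 16 * V\<^sup>2 * (1/2) ^ (k - p)"
proof -
  define q r where "q = (k - p) div N" and "r = (k - p) mod N"
  have "k - p = q * N + r" "r < N" using N by (auto simp: q_def r_def)
  moreover have "1 \<le> q" using div_le_mono[of N "k - p" N] k N by (simp add: q_def)
  then have "N \<le> q * N" by simp
  ultimately have "k - p \<le> 4 * (q * N)" by linarith
  then have "(2::real) ^ (k - p) \<le> 2 ^ (4 * (q * N))" by (intro power_increasing) auto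
  then have "(cmod (v (p + r)))\<^sup>2 * 2 ^ (k - p) \<le> V\<^sup>2 * 16 ^ (q * N)"
    using v[of "p + r"] by (intro mult_mono power_mono) (auto simp: power_mult)
  moreover have "periodic_point p m N v k = v (p + r) / of_real (omega_prod p m (q * N) (p + r))"
    using k by (simp add: periodic_point_def q_def r_def)
  ultimately show ?thesis using norm_div_omega_prod_sq_le[OF m zero_le_power2] by simp
qed

lemma periodic_point_Bp:
  assumes "m \<ge> 1" "0 < N" "\<And>k. cmod (v k) \<le> V"
  shows "periodic_point p m N v \<in> Bp p"
proof (rule Bp_if_geometric_bound[where K = "p + N"])
  show "periodic_point p m N v k = 0" if "k < p" for k using that by (simp add: periodic_point_def)
qed (rule periodic_point_tail[OF assms])

lemma Hbrev_power_periodic_point: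
  assumes m: "m \<ge> 1" and N: "0 < N"
  shows "(Hbrev p m ^^ N) (periodic_point p m N v) = periodic_point p m N v"
proof
  fix k
  show "(Hbrev p m ^^ N) (periodic_point p m N v) k = periodic_point p m N v k"
  proof (cases "p \<le> k")
    case True
    obtain i where k: "k = p + i" using True le_iff_add by blast
    define q r where "q = i div N" and "r = i mod N"
    have shift: "(i + N) div N = Suc q" "(i + N) mod N = r"
      using N by (simp_all add: q_def r_def)
    have "p + r + q * N = k" by (simp add: k q_def r_def)
    then have "omega_prod p m (Suc q * N) (p + r)
        = omega_prod p m (q * N) (p + r) * omega_prod p m N k"
      using omega_prod_add[of p m "q * N" N "p + r"] by (simp add: add.commute[of N])
    moreover have "(Hbrev p m ^^ N) (periodic_point p m N v) k
        = of_real (omega_prod p m N k) * v (p + r) / of_real (omega_prod p m (Suc q * N) (p + r))"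
      using shift by (simp add: k Hbrev_power_apply periodic_point_def add.assoc)
    moreover have "periodic_point p m N v k = v (p + r) / of_real (omega_prod p m (q * N) (p + r))"
      by (simp add: k periodic_point_def q_def r_def)
    ultimately show ?thesis
      using omega_prod_pos[OF m, of p N k] by (simp add: field_simps)
  qed (use Hbrev_power_below N in \<open>simp add: periodic_point_def\<close>)
qed

lemma dense_periodic_points:
  assumes m: "m \<ge> 1"
  shows "dense_in {\<phi>\<in>Bp p. \<exists>j\<ge>1. \<phi> \<in> pow_dom (Hdom p m) (Hbrev p m) j \<and> (Hbrev p m ^^ j) \<phi> = \<phi>}
    (Bp p)" (is "dense_in ?P _")
proof (rule dense_in_Bp_if_geometric_tails)
  fix xs
  define V where "V = (\<Sum>q\<leftarrow>xs. cmod (rat_complex q))"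
  show "\<exists>C. \<forall>M0. \<exists>M\<ge>M0. \<exists>a\<in>?P. (\<forall>k<p + M. a k = rat_vec p xs k) \<and>
      (\<forall>k\<ge>p + M. (cmod (a k))\<^sup>2 \<le> C * (1/2)^(k - p))"
  proof (intro exI[of _ "16 ^ 16 * V\<^sup>2"] allI)
    fix M0
    let ?N = "Suc M0" let ?a = "periodic_point p m ?N (rat_vec p xs)"
    have "?a \<in> Bp p" using periodic_point_Bp[OF m _ norm_rat_vec_le] by simp
    moreover have "(Hbrev p m ^^ ?N) ?a = ?a" by (rule Hbrev_power_periodic_point[OF m]) simp
    ultimately have "?a \<in> pow_dom (Hdom p m) (Hbrev p m) ?N" using pow_dom_Hdom_iff[OF m] by simp
    with \<open>?a \<in> Bp p\<close> \<open>(Hbrev p m ^^ ?N) ?a = ?a\<close> have "?a \<in> ?P"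
      by (intro CollectI conjI exI[of _ ?N]) auto
    moreover have "?a k = rat_vec p xs k" if "k < p + ?N" for k
      using that periodic_point_head by (cases "p \<le> k") (auto simp: periodic_point_def rat_vec_def)
    moreover have "(cmod (?a k))\<^sup>2 \<le> 16 ^ 16 * V\<^sup>2 * (1/2)^(k - p)" if "p + ?N \<le> k" for k
      using periodic_point_tail[OF m _ norm_rat_vec_le that] by (simp add: V_def)
    ultimately show "\<exists>M\<ge>M0. \<exists>a\<in>?P. (\<forall>k<p + M. a k = rat_vec p xs k) \<and>
        (\<forall>k\<ge>p + M. (cmod (a k))\<^sup>2 \<le> 16 ^ 16 * V\<^sup>2 * (1/2)^(k - p))"
      by (intro exI[of _ ?N] bexI[of _ ?a]) auto
  qed
qed blast

section \<open>A hypercyclic vector\<close>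

text \<open>Block l occupies the coordinates p + i + l^2 with i < l and holds u l (p + i), divided
by the product of weights that H^(l^2) multiplies it with.\<close>

definition block_vector :: "nat \<Rightarrow> nat \<Rightarrow> (nat \<Rightarrow> nat \<Rightarrow> complex) \<Rightarrow> nat \<Rightarrow> complex" where
  "block_vector p m u k = (let l = floor_sqrt (k - p); i = k - p - l\<^sup>2 in
     if p \<le> k \<and> i < l then u l (p + i) / of_real (omega_prod p m (l\<^sup>2) (p + i)) else 0)"

lemma block_vector_block:
  "i < l \<Longrightarrow> block_vector p m u (p + i + l\<^sup>2) = u l (p + i) / of_real (omega_prod p m (l\<^sup>2) (p + i))"
proof -
  assume "i < l"
  then have "floor_sqrt (l\<^sup>2 + i) = l" by (intro floor_sqrt_unique) (auto simp: power2_eq_square)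
  then show ?thesis using \<open>i < l\<close> by (simp add: block_vector_def Let_def add.commute[of i])
qed

lemma block_vector_cases:
  assumes "p \<le> k"
  obtains "block_vector p m u k = 0" | l i where "i < l" "k = p + i + l\<^sup>2"
proof (cases "k - p - (floor_sqrt (k - p))\<^sup>2 < floor_sqrt (k - p)")
  case True
  define l i where "l = floor_sqrt (k - p)" and "i = k - p - l\<^sup>2"
  have "l\<^sup>2 \<le> k - p" by (simp add: l_def)
  then have "k = p + i + l\<^sup>2" using assms by (simp add: i_def)
  then show ?thesis using True by (intro that(2)) (simp_all add: l_def i_def)
qed (simp add: that(1) block_vector_def Let_def)

lemma block_index_gt: "i < (l::nat) \<Longrightarrow> n\<^sup>2 + n \<le> l\<^sup>2 + i \<Longrightarrow> n < l"
proof (rule ccontr)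
  assume "i < l" "n\<^sup>2 + n \<le> l\<^sup>2 + i" "\<not> n < l"
  then have "l \<le> n" by simp
  then have "l\<^sup>2 \<le> n\<^sup>2" by (rule power_mono) simp
  then show False using \<open>i < l\<close> \<open>n\<^sup>2 + n \<le> l\<^sup>2 + i\<close> \<open>\<not> n < l\<close> by linarith
qed

lemma Hbrev_power_block_vector_tail:
  assumes m: "m \<ge> 1" and u: "\<And>l k. cmod (u l k) \<le> real l"
    and N: "N \<le> n\<^sup>2" and k: "p + n\<^sup>2 + n \<le> k + N"
  shows "(cmod ((Hbrev p m ^^ N) (block_vector p m u) k))\<^sup>2 \<le> 16 ^ 16 * (1/2) ^ (k - p)"
proof -
  have pk: "p \<le> k" using N k by linarith
  have "p \<le> k + N" using pk by simp
  then show ?thesis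
  proof (cases rule: block_vector_cases[where m = m and u = u])
    case 1
    with pk show ?thesis by (simp add: Hbrev_power_apply)
  next
    case (2 l i)
    have "n < l" using 2 k by (intro block_index_gt[OF 2(1)]) linarith
    have "n * n + l \<le> n * l + l" using mult_le_mono2[of n l n] \<open>n < l\<close> by simp
    also have "\<dots> \<le> l * l" using mult_le_mono1[of "Suc n" l l] \<open>n < l\<close> by simp
    finally have "n\<^sup>2 + l \<le> l\<^sup>2" by (simp add: power2_eq_square)
    define d where "d = l\<^sup>2 - N"
    have ld: "l\<^sup>2 = d + N" "l \<le> d" and kd: "k = p + i + d"
      using \<open>n\<^sup>2 + l \<le> l\<^sup>2\<close> N 2(2) by (auto simp: d_def)
    have "(Hbrev p m ^^ N) (block_vector p m u) k
        = of_real (omega_prod p m N k) * (u l (p + i) / of_real (omega_prod p m (l\<^sup>2) (p + i)))"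
      using pk 2 by (simp add: Hbrev_power_apply block_vector_block)
    also have "omega_prod p m (l\<^sup>2) (p + i) = omega_prod p m d (p + i) * omega_prod p m N k"
      using omega_prod_add[of p m d N "p + i"] by (simp add: ld(1) kd)
    also have "of_real (omega_prod p m N k) * (u l (p + i) /
        of_real (omega_prod p m d (p + i) * omega_prod p m N k))
      = u l (p + i) / of_real (omega_prod p m d (p + i))"
      using omega_prod_pos[OF m, of p N k] omega_prod_pos[OF m, of p d "p + i"]
      by (simp add: field_simps)
    finally have eq:
      "(Hbrev p m ^^ N) (block_vector p m u) k = u l (p + i) / of_real (omega_prod p m d (p + i))" .
    have "(cmod (u l (p + i)))\<^sup>2 \<le> (real l)\<^sup>2" using u by (intro power_mono) auto
    also have "\<dots> \<le> (2 ^ l)\<^sup>2" by (intro power_mono) (simp_all add: less_imp_le)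
    also have "\<dots> = 4 ^ l" by (simp add: power2_eq_square power_mult_distrib[symmetric])
    also have "\<dots> \<le> 4 ^ d" using ld(2) by (intro power_increasing) auto
    finally have "(cmod (u l (p + i)))\<^sup>2 \<le> 4 ^ d" .
    moreover have "(2::real) ^ (k - p) \<le> 2 ^ (2 * d)"
      using kd 2(1) ld(2) by (intro power_increasing) auto
    then have "(2::real) ^ (k - p) \<le> 4 ^ d" by (simp add: power_mult)
    ultimately have "(cmod (u l (p + i)))\<^sup>2 * 2 ^ (k - p) \<le> 4 ^ d * 4 ^ d"
      by (intro mult_mono) auto
    also have "\<dots> = 1 * 16 ^ d" by (simp add: power_mult_distrib[symmetric])
    finally have "(cmod (u l (p + i)))\<^sup>2 * 2 ^ (k - p) \<le> 1 * 16 ^ d" .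
    then show ?thesis using norm_div_omega_prod_sq_le[OF m zero_le_one] by (simp add: eq)
  qed
qed

lemma Hbrev_power_block_vector_Bp:
  assumes m: "m \<ge> 1" and u: "\<And>l k. cmod (u l k) \<le> real l"
  shows "(Hbrev p m ^^ N) (block_vector p m u) \<in> Bp p"
proof (rule Bp_if_geometric_bound[where K = "p + N\<^sup>2"])
  show "(Hbrev p m ^^ N) (block_vector p m u) k = 0" if "k < p" for k
    using that by (cases N) (simp_all add: block_vector_def Hbrev_def)
  show "(cmod ((Hbrev p m ^^ N) (block_vector p m u) k))\<^sup>2 \<le> 16 ^ 16 * (1/2) ^ (k - p)"
    if "p + N\<^sup>2 \<le> k" for k
    using that
    by (intro Hbrev_power_block_vector_tail[OF m u, of N N]) (auto simp: power2_eq_square)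
qed

lemma Hbrev_power_block_vector_head:
  assumes m: "m \<ge> 1" and i: "i < n"
  shows "(Hbrev p m ^^ n\<^sup>2) (block_vector p m u) (p + i) = u n (p + i)"
proof -
  show ?thesis
    using block_vector_block[OF i] omega_prod_pos[OF m, of p "n\<^sup>2" "p + i"]
    by (simp add: Hbrev_power_apply)
qed

text \<open>Pairing with a dummy natural number makes every list recur infinitely often.\<close>

definition rat_list_enum :: "nat \<Rightarrow> (rat \<times> rat) list" where
  "rat_list_enum n = fst (from_nat n :: (rat \<times> rat) list \<times> nat)"

lemma rat_list_enum_frequently: "\<exists>n\<ge>B. rat_list_enum n = xs"
proof -
  have "inj (\<lambda>b::nat. to_nat (xs, b))" by (auto simp: inj_def)
  then have "infinite (range (\<lambda>b::nat. to_nat (xs, b)))" by (rule range_inj_infinite)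
  then obtain n where "n \<ge> B" "n \<in> range (\<lambda>b::nat. to_nat (xs, b))"
    using infinite_nat_iff_unbounded_le by blast
  then show ?thesis by (auto simp: rat_list_enum_def)
qed

text \<open>A list is only used as block n if its entries sum to at most n in modulus; this bound
keeps the later blocks small, and every list satisfies it at the large indices where it recurs.\<close>

definition rat_blocks :: "nat \<Rightarrow> nat \<Rightarrow> nat \<Rightarrow> complex" where
  "rat_blocks p n = (if (\<Sum>q\<leftarrow>rat_list_enum n. cmod (rat_complex q)) \<le> real n
     then rat_vec p (rat_list_enum n) else (\<lambda>_. 0))"

lemma norm_rat_blocks_le: "cmod (rat_blocks p n k) \<le> real n"
  using norm_rat_vec_le[of p "rat_list_enum n" k] by (auto simp: rat_blocks_def)

definition hypercyclic_vector :: "nat \<Rightarrow> nat \<Rightarrow> nat \<Rightarrow> complex" where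
  "hypercyclic_vector p m = block_vector p m (rat_blocks p)"

lemma Hbrev_power_hypercyclic_vector_Bp:
  "m \<ge> 1 \<Longrightarrow> (Hbrev p m ^^ N) (hypercyclic_vector p m) \<in> Bp p"
  unfolding hypercyclic_vector_def by (rule Hbrev_power_block_vector_Bp[OF _ norm_rat_blocks_le])

lemma dense_orbit_hypercyclic_vector:
  assumes m: "m \<ge> 1"
  shows "dense_in (range (\<lambda>n. (Hbrev p m ^^ n) (hypercyclic_vector p m))) (Bp p)"
    (is "dense_in ?O _")
proof (rule dense_in_Bp_if_geometric_tails)
  show "?O \<subseteq> Bp p" using Hbrev_power_hypercyclic_vector_Bp[OF m] by blast
  fix xs
  define V where "V = (\<Sum>q\<leftarrow>xs. cmod (rat_complex q))"
  show "\<exists>C. \<forall>M0. \<exists>M\<ge>M0. \<exists>a\<in>?O. (\<forall>k<p + M. a k = rat_vec p xs k) \<and>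
      (\<forall>k\<ge>p + M. (cmod (a k))\<^sup>2 \<le> C * (1/2)^(k - p))"
  proof (intro exI[of _ "16 ^ 16 :: real"] allI)
    fix M0
    obtain n where n: "M0 + nat \<lceil>V\<rceil> \<le> n" and xs: "rat_list_enum n = xs"
      using rat_list_enum_frequently by blast
    let ?a = "(Hbrev p m ^^ n\<^sup>2) (hypercyclic_vector p m)"
    have "V \<le> real n" using n real_nat_ceiling_ge[of V] by linarith
    then have block: "rat_blocks p n = rat_vec p xs" by (simp add: rat_blocks_def xs V_def)
    have "?a k = rat_vec p xs k" if "k < p + n" for k
    proof (cases "p \<le> k")
      case True
      then obtain i where "k = p + i" using le_iff_add by blast
      with that have "k = p + i" "i < n" by simp_all
      then show ?thesis
        using Hbrev_power_block_vector_head[OF m] by (simp add: hypercyclic_vector_def block)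
    next
      case False
      then show ?thesis
        using Hbrev_power_hypercyclic_vector_Bp[OF m] by (simp add: Bp_def rat_vec_def)
    qed
    moreover have "(cmod (?a k))\<^sup>2 \<le> 16 ^ 16 * (1/2)^(k - p)" if "p + n \<le> k" for k
      unfolding hypercyclic_vector_def
      using that by (intro Hbrev_power_block_vector_tail[OF m norm_rat_blocks_le, of "n\<^sup>2" n]) auto
    ultimately show "\<exists>M\<ge>M0. \<exists>a\<in>?O. (\<forall>k<p + M. a k = rat_vec p xs k) \<and>
        (\<forall>k\<ge>p + M. (cmod (a k))\<^sup>2 \<le> 16 ^ 16 * (1/2)^(k - p))"
      using n by (intro exI[of _ n] bexI[of _ ?a]) auto
  qed
qed

theorem theorem3p5:
  fixes p m :: nat
  assumes "m \<ge> 1"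
  shows "chaotic (Bp p) (Hdom p m) (Hbrev p m)"
  unfolding chaotic_def
proof (intro conjI allI impI exI[of _ "hypercyclic_vector p m"])
  show "linear_op (Bp p) (Hdom p m) (Hbrev p m)" by (rule linear_op_Hbrev)
  show "dense_in (Hdom p m) (Bp p)" by (rule dense_Hdom)
  show "closed_op (Bp p) (pow_dom (Hdom p m) (Hbrev p m) n) (Hbrev p m ^^ n)" if "n \<ge> 1" for n
    using closed_op_Hbrev_power[OF assms] that by simp
  show "hypercyclic_vector p m \<in> pow_dom (Hdom p m) (Hbrev p m) n" if "n \<ge> 1" for n
    using pow_dom_Hdom_iff[OF assms] Hbrev_power_hypercyclic_vector_Bp[OF assms, of 0]
      Hbrev_power_hypercyclic_vector_Bp[OF assms, of n] that by simp
  show "dense_in (range (\<lambda>n. (Hbrev p m ^^ n) (hypercyclic_vector p m))) (Bp p)"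
    by (rule dense_orbit_hypercyclic_vector[OF assms])
  show "dense_in {\<phi>\<in>Bp p. \<exists>j\<ge>1. \<phi> \<in> pow_dom (Hdom p m) (Hbrev p m) j \<and> (Hbrev p m ^^ j) \<phi> = \<phi>}
      (Bp p)"
    by (rule dense_periodic_points[OF assms])
qed

end
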